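(* Let $T$ be the 2-monad on $\mathrm{Cat}$ whose strict algebras are strict monoidal categories (and strict algebra morphisms strict monoidal functors). A strict monoidal category is a pie $T$-algebra if and only if its underlying monoid of objects is a free monoid; that is, if and only if it is a (many-sorted) PRO.
   Context: For a 2-monad $T$ with rank on a complete and cocomplete 2-category $\mathcal C$, $T\text{-Alg}_s$ denotes strict $T$-algebras and strict morphisms, and $T\text{-Alg}$ strict $T$-algebras and pseudomorphisms (algebra morphisms preserving the structure up to coherent invertible 2-cells; here, strong monoidal functors). The inclusion $T\text{-Alg}_s\to T\text{-Alg}$ has a left 2-adjoint $Q$, giving a 2-comonad $Q$ on $T\text{-Alg}_s$; a $T$-algebra is pie if it admits the structure of a strict $Q$-coalgebra. *)

theory Defs
  imports Main
begin

record ('o, 'm) smc =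
  s_ob   :: "'o set"
  s_ar   :: "'m set"
  s_dom  :: "'m \<Rightarrow> 'o"
  s_cod  :: "'m \<Rightarrow> 'o"
  s_id   :: "'o \<Rightarrow> 'm"
  s_comp :: "'m \<Rightarrow> 'm \<Rightarrow> 'm"   (* s_comp g f = g o f *)
  s_tob  :: "'o \<Rightarrow> 'o \<Rightarrow> 'o"
  s_tar  :: "'m \<Rightarrow> 'm \<Rightarrow> 'm"
  s_unit :: "'o"

definition is_category :: "('o, 'm) smc \<Rightarrow> bool" where
  "is_category C \<longleftrightarrow>
     (\<forall>f\<in>s_ar C. s_dom C f \<in> s_ob C \<and> s_cod C f \<in> s_ob C) \<and>
     (\<forall>a\<in>s_ob C. s_id C a \<in> s_ar C \<and> s_dom C (s_id C a) = a \<and> s_cod C (s_id C a) = a) \<and>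
     (\<forall>f\<in>s_ar C. \<forall>g\<in>s_ar C. s_dom C g = s_cod C f \<longrightarrow>
        s_comp C g f \<in> s_ar C \<and> s_dom C (s_comp C g f) = s_dom C f \<and>
        s_cod C (s_comp C g f) = s_cod C g) \<and>
     (\<forall>f\<in>s_ar C. s_comp C f (s_id C (s_dom C f)) = f \<and> s_comp C (s_id C (s_cod C f)) f = f) \<and>
     (\<forall>f\<in>s_ar C. \<forall>g\<in>s_ar C. \<forall>h\<in>s_ar C. s_dom C g = s_cod C f \<longrightarrow> s_dom C h = s_cod C g \<longrightarrow>
        s_comp C h (s_comp C g f) = s_comp C (s_comp C h g) f)"

definition is_smc :: "('o, 'm) smc \<Rightarrow> bool" where
  "is_smc C \<longleftrightarrow> is_category C \<and>
     s_unit C \<in> s_ob C \<and>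
     (\<forall>a\<in>s_ob C. \<forall>b\<in>s_ob C. s_tob C a b \<in> s_ob C) \<and>
     (\<forall>f\<in>s_ar C. \<forall>g\<in>s_ar C. s_tar C f g \<in> s_ar C \<and>
        s_dom C (s_tar C f g) = s_tob C (s_dom C f) (s_dom C g) \<and>
        s_cod C (s_tar C f g) = s_tob C (s_cod C f) (s_cod C g)) \<and>
     (\<forall>a\<in>s_ob C. \<forall>b\<in>s_ob C. \<forall>c\<in>s_ob C. s_tob C (s_tob C a b) c = s_tob C a (s_tob C b c)) \<and>
     (\<forall>a\<in>s_ob C. s_tob C (s_unit C) a = a \<and> s_tob C a (s_unit C) = a) \<and>
     (\<forall>f\<in>s_ar C. \<forall>g\<in>s_ar C. \<forall>h\<in>s_ar C. s_tar C (s_tar C f g) h = s_tar C f (s_tar C g h)) \<and>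
     (\<forall>f\<in>s_ar C. s_tar C (s_id C (s_unit C)) f = f \<and> s_tar C f (s_id C (s_unit C)) = f) \<and>
     (\<forall>a\<in>s_ob C. \<forall>b\<in>s_ob C. s_tar C (s_id C a) (s_id C b) = s_id C (s_tob C a b)) \<and>
     (\<forall>f\<in>s_ar C. \<forall>g\<in>s_ar C. \<forall>f'\<in>s_ar C. \<forall>g'\<in>s_ar C.
        s_dom C g = s_cod C f \<longrightarrow> s_dom C g' = s_cod C f' \<longrightarrow>
        s_tar C (s_comp C g f) (s_comp C g' f') = s_comp C (s_tar C g g') (s_tar C f f'))"

definition strict_monoidal_functor ::
  "('o, 'm) smc \<Rightarrow> ('p, 'n) smc \<Rightarrow> ('o \<Rightarrow> 'p) \<Rightarrow> ('m \<Rightarrow> 'n) \<Rightarrow> bool" where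
  "strict_monoidal_functor C D Fo Fm \<longleftrightarrow>
     (\<forall>a\<in>s_ob C. Fo a \<in> s_ob D) \<and>
     (\<forall>f\<in>s_ar C. Fm f \<in> s_ar D \<and> s_dom D (Fm f) = Fo (s_dom C f) \<and> s_cod D (Fm f) = Fo (s_cod C f)) \<and>
     (\<forall>a\<in>s_ob C. Fm (s_id C a) = s_id D (Fo a)) \<and>
     (\<forall>f\<in>s_ar C. \<forall>g\<in>s_ar C. s_dom C g = s_cod C f \<longrightarrow> Fm (s_comp C g f) = s_comp D (Fm g) (Fm f)) \<and>
     Fo (s_unit C) = s_unit D \<and>
     (\<forall>a\<in>s_ob C. \<forall>b\<in>s_ob C. Fo (s_tob C a b) = s_tob D (Fo a) (Fo b)) \<and>
     (\<forall>f\<in>s_ar C. \<forall>g\<in>s_ar C. Fm (s_tar C f g) = s_tar D (Fm f) (Fm g))"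

section \<open>The comonad Q on T-Alg_s (pseudomorphism classifier for strict monoidal categories)\<close>

definition tens :: "('o, 'm) smc \<Rightarrow> 'o list \<Rightarrow> 'o" where
  "tens C xs = foldr (s_tob C) xs (s_unit C)"

text \<open>Q A: objects are finite lists of objects of A (the free monoid on Ob A); a morphism
  as \<rightarrow> bs is a morphism tens as \<rightarrow> tens bs of A, recorded as a triple (as, bs, f).\<close>
definition Qsmc :: "('o, 'm) smc \<Rightarrow> ('o list, 'o list \<times> 'o list \<times> 'm) smc" where
  "Qsmc C = \<lparr>
     s_ob = lists (s_ob C),
     s_ar = {(as, bs, f). as \<in> lists (s_ob C) \<and> bs \<in> lists (s_ob C) \<and> f \<in> s_ar C \<and>
                          s_dom C f = tens C as \<and> s_cod C f = tens C bs},
     s_dom = (\<lambda>(as, bs, f). as),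
     s_cod = (\<lambda>(as, bs, f). bs),
     s_id = (\<lambda>as. (as, as, s_id C (tens C as))),
     s_comp = (\<lambda>(bs, cs, g) (as, bs', f). (as, cs, s_comp C g f)),
     s_tob = (@),
     s_tar = (\<lambda>(as, bs, f) (as', bs', f'). (as @ as', bs @ bs', s_tar C f f')),
     s_unit = [] \<rparr>"

definition eps_ob :: "('o, 'm) smc \<Rightarrow> 'o list \<Rightarrow> 'o" where
  "eps_ob C = tens C"
definition eps_ar :: "'o list \<times> 'o list \<times> 'm \<Rightarrow> 'm" where
  "eps_ar = (\<lambda>(as, bs, f). f)"

definition delta_ob :: "'o list \<Rightarrow> 'o list list" where
  "delta_ob as = map (\<lambda>x. [x]) as"
definition delta_ar :: "'o list \<times> 'o list \<times> 'm \<Rightarrow>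
     'o list list \<times> 'o list list \<times> ('o list \<times> 'o list \<times> 'm)" where
  "delta_ar = (\<lambda>(as, bs, f). (delta_ob as, delta_ob bs, (as, bs, f)))"

definition Q_ob :: "('o \<Rightarrow> 'p) \<Rightarrow> 'o list \<Rightarrow> 'p list" where
  "Q_ob Fo = map Fo"
definition Q_ar :: "('o \<Rightarrow> 'p) \<Rightarrow> ('m \<Rightarrow> 'n) \<Rightarrow> 'o list \<times> 'o list \<times> 'm \<Rightarrow> 'p list \<times> 'p list \<times> 'n" where
  "Q_ar Fo Fm = (\<lambda>(as, bs, f). (map Fo as, map Fo bs, Fm f))"

definition Q_coalgebra :: "('o, 'm) smc \<Rightarrow> ('o \<Rightarrow> 'o list) \<Rightarrow> ('m \<Rightarrow> 'o list \<times> 'o list \<times> 'm) \<Rightarrow> bool" where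
  "Q_coalgebra C so sm \<longleftrightarrow>
     strict_monoidal_functor C (Qsmc C) so sm \<and>
     (\<forall>a\<in>s_ob C. eps_ob C (so a) = a) \<and>
     (\<forall>f\<in>s_ar C. eps_ar (sm f) = f) \<and>
     (\<forall>a\<in>s_ob C. delta_ob (so a) = Q_ob so (so a)) \<and>
     (\<forall>f\<in>s_ar C. delta_ar (sm f) = Q_ar so sm (sm f))"

definition pie_algebra :: "('o, 'm) smc \<Rightarrow> bool" where
  "pie_algebra C \<longleftrightarrow> (\<exists>so sm. Q_coalgebra C so sm)"

definition free_monoid_of_objects :: "('o, 'm) smc \<Rightarrow> bool" where
  "free_monoid_of_objects C \<longleftrightarrow> (\<exists>X \<subseteq> s_ob C. bij_betw (tens C) (lists X) (s_ob C))"

end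

theory Submission
  imports Defs
begin

text \<open>A strict Q-coalgebra structure s : A \<rightarrow> Q A writes every object as a word of objects.
  The counit law says the word tensors back to the object; the coassociativity law says every
  letter x of such a word satisfies s x = [x]. Hence the letters form a set X of generators on
  whose words s inverts the tensor, so Ob A is free on X. Conversely, if Ob A is free on X, the
  inverse of the tensor is a strict monoidal map on objects, and f \<mapsto> (s (dom f), s (cod f), f)
  completes it to a coalgebra.\<close>

lemma smc_dom_cod_in_ob:
  assumes "is_smc C" "f \<in> s_ar C"
  shows "s_dom C f \<in> s_ob C" "s_cod C f \<in> s_ob C"
  using assms by (auto simp: is_smc_def is_category_def)

lemma tens_in_ob:
  assumes "is_smc C" "xs \<in> lists (s_ob C)"
  shows "tens C xs \<in> s_ob C"
  using assms(2) by (induction xs) (use assms(1) in \<open>auto simp: tens_def is_smc_def\<close>)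

lemma tens_singleton:
  assumes "is_smc C" "x \<in> s_ob C"
  shows "tens C [x] = x"
  using assms by (simp add: tens_def is_smc_def)

lemma tens_append:
  assumes "is_smc C" "xs \<in> lists (s_ob C)" "ys \<in> lists (s_ob C)"
  shows "tens C (xs @ ys) = s_tob C (tens C xs) (tens C ys)"
  using assms(2)
proof (induction xs)
  case Nil
  then show ?case using assms(1) tens_in_ob[OF assms(1,3)] by (simp add: tens_def is_smc_def)
next
  case (Cons x xs)
  then show ?case using assms(1) tens_in_ob[OF assms(1)] tens_in_ob[OF assms(1,3)]
    by (simp add: tens_def is_smc_def)
qed

lemma tens_Qsmc: "tens (Qsmc C) xss = concat xss"
  by (induction xss) (simp_all add: tens_def Qsmc_def)

lemma strict_monoidal_functor_tens:
  assumes "strict_monoidal_functor C D Fo Fm" "is_smc C" "xs \<in> lists (s_ob C)"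
  shows "Fo (tens C xs) = tens D (map Fo xs)"
  using assms(3)
proof (induction xs)
  case Nil
  then show ?case using assms(1) by (simp add: tens_def strict_monoidal_functor_def)
next
  case (Cons x xs)
  then show ?case using assms(1) tens_in_ob[OF assms(2)]
    by (simp add: tens_def strict_monoidal_functor_def)
qed

lemma Q_coalgebra_letters_fixed:
  assumes "Q_coalgebra C so sm" "a \<in> s_ob C" "x \<in> set (so a)"
  shows "so x = [x]"
proof -
  have "map (\<lambda>x. [x]) (so a) = map so (so a)"
    using assms(1,2) by (simp add: Q_coalgebra_def delta_ob_def Q_ob_def)
  then show ?thesis using assms(3) by (metis map_eq_conv)
qed

lemma Q_coalgebra_free_monoid_of_objects:
  assumes smc: "is_smc C" and coalg: "Q_coalgebra C so sm"
  shows "free_monoid_of_objects C"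
proof -
  have F: "strict_monoidal_functor C (Qsmc C) so sm"
    using coalg by (simp add: Q_coalgebra_def)
  define X where "X = {x \<in> s_ob C. so x = [x]}"
  have X_ob: "X \<subseteq> s_ob C" by (auto simp: X_def)
  have so_in_lists: "so a \<in> lists X" if "a \<in> s_ob C" for a
    using F that Q_coalgebra_letters_fixed[OF coalg that]
    by (auto simp: X_def strict_monoidal_functor_def Qsmc_def)
  have tens_so: "tens C (so a) = a" if "a \<in> s_ob C" for a
    using coalg that by (simp add: Q_coalgebra_def eps_ob_def)
  have so_tens: "so (tens C xs) = xs" if xs: "xs \<in> lists X" for xs
  proof -
    have "so (tens C xs) = concat (map so xs)"
      using strict_monoidal_functor_tens[OF F smc] xs X_ob by (auto simp: tens_Qsmc)
    also have "map so xs = map (\<lambda>x. [x]) xs" using xs by (auto simp: X_def)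
    finally show ?thesis by simp
  qed
  have "bij_betw (tens C) (lists X) (s_ob C)"
  proof (rule bij_betw_imageI)
    show "inj_on (tens C) (lists X)" by (metis inj_onI so_tens)
    show "tens C ` lists X = s_ob C"
    proof
      show "tens C ` lists X \<subseteq> s_ob C" using tens_in_ob[OF smc] X_ob by blast
      show "s_ob C \<subseteq> tens C ` lists X" using so_in_lists tens_so by (metis image_eqI subsetI)
    qed
  qed
  then show ?thesis using X_ob by (auto simp: free_monoid_of_objects_def)
qed

context
  fixes C :: "('o, 'm) smc" and X :: "'o set"
  assumes smc: "is_smc C" and X_ob: "X \<subseteq> s_ob C"
    and free: "bij_betw (tens C) (lists X) (s_ob C)"
begin

definition word :: "'o \<Rightarrow> 'o list" where
  "word = inv_into (lists X) (tens C)"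

definition word_ar :: "'m \<Rightarrow> 'o list \<times> 'o list \<times> 'm" where
  "word_ar f = (word (s_dom C f), word (s_cod C f), f)"

lemma word_in_lists: "a \<in> s_ob C \<Longrightarrow> word a \<in> lists X"
  using free by (metis bij_betw_def inv_into_into word_def)

lemma word_in_lists_ob: "a \<in> s_ob C \<Longrightarrow> word a \<in> lists (s_ob C)"
  using word_in_lists X_ob by blast

lemma tens_word: "a \<in> s_ob C \<Longrightarrow> tens C (word a) = a"
  using free by (metis bij_betw_def f_inv_into_f word_def)

lemma word_tens: "xs \<in> lists X \<Longrightarrow> word (tens C xs) = xs"
  using free by (metis bij_betw_def inv_into_f_f word_def)

lemma word_unit: "word (s_unit C) = []"
  using word_tens[of "[]"] by (simp add: tens_def)

lemma word_tob:
  assumes "a \<in> s_ob C" "b \<in> s_ob C"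
  shows "word (s_tob C a b) = word a @ word b"
proof -
  have "s_tob C a b = tens C (word a @ word b)"
    using tens_append[OF smc word_in_lists_ob word_in_lists_ob] tens_word assms by simp
  then show ?thesis using word_tens word_in_lists assms by simp
qed

lemma word_generator: "x \<in> X \<Longrightarrow> word x = [x]"
  using word_tens[of "[x]"] tens_singleton[OF smc] X_ob by auto

lemma word_strict_monoidal: "strict_monoidal_functor C (Qsmc C) word word_ar"
  using smc word_in_lists_ob tens_word word_unit word_tob smc_dom_cod_in_ob[OF smc]
  unfolding strict_monoidal_functor_def
  by (auto simp: Qsmc_def word_ar_def is_smc_def is_category_def)

lemma word_Q_coalgebra: "Q_coalgebra C word word_ar"
proof -
  have delta: "delta_ob (word a) = Q_ob word (word a)" if "a \<in> s_ob C" for a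
    using word_in_lists[OF that] word_generator by (auto simp: delta_ob_def Q_ob_def)
  show ?thesis
    unfolding Q_coalgebra_def
    using word_strict_monoidal tens_word delta smc_dom_cod_in_ob[OF smc]
    by (auto simp: eps_ob_def eps_ar_def word_ar_def delta_ar_def Q_ar_def Q_ob_def)
qed

end

theorem mainTheorem5:
  fixes C :: "('o, 'm) smc"
  assumes "is_smc C"
  shows "pie_algebra C \<longleftrightarrow> free_monoid_of_objects C"
  using Q_coalgebra_free_monoid_of_objects[OF assms] word_Q_coalgebra[OF assms]
  unfolding pie_algebra_def free_monoid_of_objects_def by blast

end
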